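(* Let $\Omega\subset\mathbb{R}^d$ ($d=2,3$) be a bounded polyhedral domain, $V_h$ the first-order finite element space on a quasi-uniform triangulation with nodal basis $\varphi_1,\dots,\varphi_n$, $K_{j,i}=(\nabla\varphi_i,\nabla\varphi_j)$, $M_{j,i}=(\varphi_i,\varphi_j)$. Let $\tilde K^{-N}$ denote the (linear) map $b\mapsto$ result of $N$ iterations, started from the zero initial guess, of a symmetric iterative method for $Kx=b$ (so $\tilde K^{-N}$ is a symmetric matrix). Define $E_N:V_h\to V_h$ by $x_{E_Nu}=(\tilde K^{-N}-K^{-1})Kx_u$, and assume there are $\gamma_0,\gamma_1\in[0,1)$ and $C>0$ independent of $\gamma_0,\gamma_1$ with $$\|E_Nu\|_1\le C\gamma_1^N\|u\|_1,\qquad \|E_Nu\|_0\le C\gamma_0^N\|u\|_0\qquad\forall u\in V_h.$$ Define $P,\tilde P:V_h\to V_h$ by $x_{Pu}=K^{-1}Mx_u$ and $x_{\tilde Pu}=\tilde K^{-N}Mx_u$. Then there exists a constant $C>0$, independent of $\kappa$, $\sigma$, $\gamma_0$, $\gamma_1$, such that $$|((\tilde P-P)u,u)|\le C\gamma_1^N\|u\|_0^2\qquad\forall u\in V_h.$$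
   Context: For $u\in V_h$, $x_u\in\mathbb{C}^n$ is its coefficient vector, $u=\sum_i(x_u)_i\varphi_i$. $(\cdot,\cdot)$ is the complex $L^2(\Omega)$ inner product, $\|\cdot\|_0$ and $\|\cdot\|_1$ the $L^2$ and $H^1$ norms. Equivalently, $Pu\in V_h$ solves $(\nabla Pu,\nabla v)=(u,v)$ for all $v\in V_h$. The parameters $\kappa\in\mathbb{R}$, $\sigma>0$ are those of the Helmholtz problem $\Delta u+(\kappa^2-\mathrm{i}\sigma)u=f$ being preconditioned. *)

theory Defs
  imports Complex_Main
begin

(* Abstract (algebraic) model of the P1 finite element space V_h with n nodal basis
   functions.  A function u in V_h is represented by its coefficient vector
   x_u :: nat => complex (only indices < n matter).  Real n x n matrices are
   represented as nat => nat => real (only indices < n matter). *)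

definition mv :: "nat \<Rightarrow> (nat \<Rightarrow> nat \<Rightarrow> real) \<Rightarrow> (nat \<Rightarrow> complex) \<Rightarrow> (nat \<Rightarrow> complex)" where
  "mv n A x = (\<lambda>i. \<Sum>j<n. complex_of_real (A i j) * x j)"

definition mm :: "nat \<Rightarrow> (nat \<Rightarrow> nat \<Rightarrow> real) \<Rightarrow> (nat \<Rightarrow> nat \<Rightarrow> real) \<Rightarrow> (nat \<Rightarrow> nat \<Rightarrow> real)" where
  "mm n A B = (\<lambda>i j. \<Sum>k<n. A i k * B k j)"

definition msub :: "(nat \<Rightarrow> nat \<Rightarrow> real) \<Rightarrow> (nat \<Rightarrow> nat \<Rightarrow> real) \<Rightarrow> (nat \<Rightarrow> nat \<Rightarrow> real)" where
  "msub A B = (\<lambda>i j. A i j - B i j)"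

definition real_sym :: "nat \<Rightarrow> (nat \<Rightarrow> nat \<Rightarrow> real) \<Rightarrow> bool" where
  "real_sym n A \<longleftrightarrow> (\<forall>i<n. \<forall>j<n. A i j = A j i)"

definition is_inverse :: "nat \<Rightarrow> (nat \<Rightarrow> nat \<Rightarrow> real) \<Rightarrow> (nat \<Rightarrow> nat \<Rightarrow> real) \<Rightarrow> bool" where
  "is_inverse n A B \<longleftrightarrow>
     (\<forall>i<n. \<forall>j<n. mm n A B i j = (if i = j then 1 else 0) \<and> mm n B A i j = (if i = j then 1 else 0))"

(* Sesquilinear form with Gram matrix A: for A = M this is the complex L2 inner
   product (u,v) = sum_{i,j} conj((x_v)_j) M_{j,i} (x_u)_i, for A = K it is (grad u, grad v). *)
definition ip :: "nat \<Rightarrow> (nat \<Rightarrow> nat \<Rightarrow> real) \<Rightarrow> (nat \<Rightarrow> complex) \<Rightarrow> (nat \<Rightarrow> complex) \<Rightarrow> complex" where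
  "ip n A x y = (\<Sum>i<n. \<Sum>j<n. cnj (y j) * complex_of_real (A j i) * x i)"

definition norm0 :: "nat \<Rightarrow> (nat \<Rightarrow> nat \<Rightarrow> real) \<Rightarrow> (nat \<Rightarrow> complex) \<Rightarrow> real" where
  "norm0 n M x = sqrt (Re (ip n M x x))"

definition norm1 :: "nat \<Rightarrow> (nat \<Rightarrow> nat \<Rightarrow> real) \<Rightarrow> (nat \<Rightarrow> nat \<Rightarrow> real) \<Rightarrow> (nat \<Rightarrow> complex) \<Rightarrow> real" where
  "norm1 n M K x = sqrt (Re (ip n M x x) + Re (ip n K x x))"

(* Structural properties of the mass matrix M and stiffness matrix K of the P1 space
   (with homogeneous Dirichlet conditions, so that K is invertible) on a fixed bounded
   domain Omega: both are real symmetric Gram matrices, M is positive definite (linearly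
   independent basis), K is positive semidefinite, and the Poincare/Friedrichs inequality
   ||u||_0^2 <= cP ||grad u||_0^2 holds with a constant cP depending only on Omega. *)
definition fe_setting :: "nat \<Rightarrow> (nat \<Rightarrow> nat \<Rightarrow> real) \<Rightarrow> (nat \<Rightarrow> nat \<Rightarrow> real) \<Rightarrow> real \<Rightarrow> bool" where
  "fe_setting n M K cP \<longleftrightarrow>
     real_sym n M \<and> real_sym n K \<and>
     (\<forall>x. (\<exists>i<n. x i \<noteq> 0) \<longrightarrow> Re (ip n M x x) > 0) \<and>
     (\<forall>x. Re (ip n K x x) \<ge> 0) \<and>
     (\<forall>x. Re (ip n M x x) \<le> cP * Re (ip n K x x))"

(* coefficient vector of E_N u:  x_{E_N u} = (Kt - K^{-1}) K x_u, Kt = tilde K^{-N} *)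
definition EN :: "nat \<Rightarrow> (nat \<Rightarrow> nat \<Rightarrow> real) \<Rightarrow> (nat \<Rightarrow> nat \<Rightarrow> real) \<Rightarrow> (nat \<Rightarrow> nat \<Rightarrow> real) \<Rightarrow> (nat \<Rightarrow> complex) \<Rightarrow> (nat \<Rightarrow> complex)" where
  "EN n K Kinv Kt x = mv n (mm n (msub Kt Kinv) K) x"

definition Pc :: "nat \<Rightarrow> (nat \<Rightarrow> nat \<Rightarrow> real) \<Rightarrow> (nat \<Rightarrow> nat \<Rightarrow> real) \<Rightarrow> (nat \<Rightarrow> complex) \<Rightarrow> (nat \<Rightarrow> complex)" where
  "Pc n Kinv M x = mv n (mm n Kinv M) x"

definition Ptc :: "nat \<Rightarrow> (nat \<Rightarrow> nat \<Rightarrow> real) \<Rightarrow> (nat \<Rightarrow> nat \<Rightarrow> real) \<Rightarrow> (nat \<Rightarrow> complex) \<Rightarrow> (nat \<Rightarrow> complex)" where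
  "Ptc n Kt M x = mv n (mm n Kt M) x"

end

theory Submission
  imports Defs
begin

(* Let z be the coefficient vector of Pu, i.e. K z = M x_u.  Then E_N(Pu) = (P~ - P)u, so
   ((P~ - P)u, u) = (grad E_N(Pu), grad Pu), which by Cauchy-Schwarz and the H^1 bound on E_N
   is at most C gamma1^N ||Pu||_1^2.  Finally ||grad Pu||_0^2 = (Pu, u) <= ||Pu||_0 ||u||_0,
   which with the Poincare inequality gives ||grad Pu||_0^2 <= cP ||u||_0^2 and
   ||Pu||_1^2 <= (cP + 1) cP ||u||_0^2. *)

lemma mv_mv: "mv n A (mv n B x) = mv n (mm n A B) x"
proof
  fix i
  have "mv n A (mv n B x) i =
      (\<Sum>j<n. \<Sum>k<n. complex_of_real (A i j) * (complex_of_real (B j k) * x k))"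
    unfolding mv_def by (simp add: sum_distrib_left)
  also have "\<dots> = (\<Sum>k<n. \<Sum>j<n. complex_of_real (A i j) * (complex_of_real (B j k) * x k))"
    by (rule sum.swap)
  also have "\<dots> = mv n (mm n A B) x i"
    unfolding mv_def mm_def by (simp add: sum_distrib_right mult.assoc)
  finally show "mv n A (mv n B x) i = mv n (mm n A B) x i" .
qed

lemma mv_cong: "(\<And>i. i < n \<Longrightarrow> v i = w i) \<Longrightarrow> mv n A v = mv n A w"
  unfolding mv_def by simp

lemma mv_msub: "mv n (msub A B) x i = mv n A x i - mv n B x i"
  unfolding mv_def msub_def by (simp add: sum_subtractf left_diff_distrib)

lemma is_inverse_mv_right_inverse:
  assumes "is_inverse n A B" "i < n"
  shows "mv n A (mv n B y) i = y i"
proof -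
  have "mv n A (mv n B y) i = (\<Sum>j<n. complex_of_real (if i = j then 1 else 0) * y j)"
    unfolding mv_mv by (simp only: mv_def) (use assms in \<open>auto simp: is_inverse_def intro!: sum.cong\<close>)
  also have "\<dots> = (\<Sum>j<n. if i = j then y j else 0)"
    by (intro sum.cong) auto
  finally show ?thesis
    using assms(2) by simp
qed

lemma ip_eq_sum_cnj_mv:
  assumes "real_sym n A"
  shows "ip n A x y = (\<Sum>j<n. cnj (mv n A y j) * x j)"
proof -
  have "ip n A x y = (\<Sum>i<n. \<Sum>j<n. cnj (complex_of_real (A i j) * y j) * x i)"
    unfolding ip_def using assms unfolding real_sym_def
    by (intro sum.cong refl) (simp add: mult.commute)
  also have "\<dots> = (\<Sum>i<n. cnj (mv n A y i) * x i)"
    unfolding mv_def by (simp add: sum_distrib_right)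
  finally show ?thesis .
qed

lemma ip_mv_transfer:
  assumes "real_sym n A" "real_sym n B" "\<And>i. i < n \<Longrightarrow> mv n A y i = mv n B w i"
  shows "ip n A x y = ip n B x w"
  unfolding ip_eq_sum_cnj_mv[OF assms(1)] ip_eq_sum_cnj_mv[OF assms(2)]
  using assms(3) by simp

lemma ip_commute_cnj:
  assumes "real_sym n A"
  shows "ip n A y x = cnj (ip n A x y)"
proof -
  have "ip n A y x = (\<Sum>j<n. \<Sum>i<n. cnj (x j) * complex_of_real (A j i) * y i)"
    unfolding ip_def by (rule sum.swap)
  also have "\<dots> = (\<Sum>j<n. \<Sum>i<n. cnj (cnj (y i) * complex_of_real (A i j) * x j))"
    using assms unfolding real_sym_def
    by (intro sum.cong refl) (simp add: mult.commute mult.left_commute)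
  finally show ?thesis
    unfolding ip_def by (simp only: cnj_sum)
qed

lemma ip_self_real:
  assumes "real_sym n A"
  shows "ip n A x x = complex_of_real (Re (ip n A x x))"
  using ip_commute_cnj[OF assms, of x x] by (simp add: complex_eq_iff)

lemma ip_diff_scaleC_self:
  "ip n A (\<lambda>i. x i - s * y i) (\<lambda>i. x i - s * y i) =
     ip n A x x - cnj s * ip n A x y - s * ip n A y x + s * cnj s * ip n A y y"
  unfolding ip_def by (simp add: sum_subtractf sum.distrib sum_distrib_left algebra_simps)

lemma quadratic_nonneg_imp_le:
  fixes a b c :: real
  assumes nonneg: "\<And>t. 0 \<le> a - 2 * t * b + t\<^sup>2 * b * c" and "a \<ge> 0" "c \<ge> 0"
  shows "b \<le> a * c"
proof (cases "c = 0")
  case True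
  show ?thesis
  proof (rule ccontr)
    assume "\<not> b \<le> a * c"
    then have "b > 0" using True by simp
    then show False
      using nonneg[of "(a + 1) / b"] True \<open>a \<ge> 0\<close> by simp
  qed
next
  case False
  then have "c > 0" using \<open>c \<ge> 0\<close> by simp
  have "0 \<le> a - 2 * (1 / c) * b + (1 / c)\<^sup>2 * b * c" by (rule nonneg)
  also have "\<dots> = a - b / c"
    using \<open>c > 0\<close> by (simp add: power2_eq_square field_simps)
  finally show ?thesis
    using \<open>c > 0\<close> by (simp add: field_simps)
qed

lemma ip_Cauchy_Schwarz:
  assumes sym: "real_sym n A" and psd: "\<And>v. Re (ip n A v v) \<ge> 0"
  shows "cmod (ip n A x y) \<le> sqrt (Re (ip n A x x)) * sqrt (Re (ip n A y y))"
proof -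
  define b where "b = ip n A x y"
  have yx: "ip n A y x = cnj b"
    unfolding b_def by (rule ip_commute_cnj[OF sym])
  have cmod_sq: "cmod b * cmod b = Re b * Re b + Im b * Im b"
    using cmod_power2[of b] by (simp add: power2_eq_square)
  have quadratic: "0 \<le> Re (ip n A x x) - 2 * t * (cmod b)\<^sup>2 + t\<^sup>2 * (cmod b)\<^sup>2 * Re (ip n A y y)"
    for t :: real
  proof -
    have "0 \<le> Re (ip n A (\<lambda>i. x i - (t * b) * y i) (\<lambda>i. x i - (t * b) * y i))"
      by (rule psd)
    also have "\<dots> = Re (ip n A x x) - 2 * t * (cmod b)\<^sup>2 + t\<^sup>2 * (cmod b)\<^sup>2 * Re (ip n A y y)"
      unfolding ip_diff_scaleC_self yx b_def[symmetric]
      by (subst (1 2) ip_self_real[OF sym])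
         (simp add: cmod_sq power2_eq_square algebra_simps)
    finally show ?thesis .
  qed
  have "(cmod b)\<^sup>2 \<le> Re (ip n A x x) * Re (ip n A y y)"
    using quadratic psd by (intro quadratic_nonneg_imp_le) (auto simp: mult.assoc)
  then have "sqrt ((cmod b)\<^sup>2) \<le> sqrt (Re (ip n A x x) * Re (ip n A y y))"
    by (rule real_sqrt_le_mono)
  then show ?thesis
    unfolding b_def by (simp add: real_sqrt_mult)
qed

lemma fe_settingD:
  assumes "fe_setting n M K cP"
  shows "real_sym n M" "real_sym n K" "Re (ip n K v v) \<ge> 0"
    and "Re (ip n M v v) \<le> cP * Re (ip n K v v)"
  using assms unfolding fe_setting_def by blast+

lemma fe_setting_mass_nonneg:
  assumes "fe_setting n M K cP"
  shows "Re (ip n M v v) \<ge> 0"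
proof (cases "\<exists>i<n. v i \<noteq> 0")
  case True
  then show ?thesis
    using assms unfolding fe_setting_def by (auto intro: less_imp_le)
next
  case False
  then have "ip n M v v = 0" unfolding ip_def by simp
  then show ?thesis by simp
qed

lemma fe_setting_norm1_sq:
  assumes "fe_setting n M K cP"
  shows "(norm1 n M K x)\<^sup>2 = Re (ip n M x x) + Re (ip n K x x)"
  unfolding norm1_def using fe_settingD(3)[OF assms] fe_setting_mass_nonneg[OF assms] by simp

lemma fe_setting_norm1_nonneg: "fe_setting n M K cP \<Longrightarrow> norm1 n M K x \<ge> 0"
  unfolding norm1_def using fe_settingD(3) fe_setting_mass_nonneg by simp

lemma fe_setting_stiffness_le_norm1:
  assumes "fe_setting n M K cP"
  shows "cmod (ip n K x y) \<le> norm1 n M K x * norm1 n M K y"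
proof -
  have "cmod (ip n K x y) \<le> sqrt (Re (ip n K x x)) * sqrt (Re (ip n K y y))"
    using ip_Cauchy_Schwarz fe_settingD(2,3)[OF assms] .
  also have "\<dots> \<le> norm1 n M K x * norm1 n M K y"
    unfolding norm1_def using fe_settingD(3)[OF assms] fe_setting_mass_nonneg[OF assms]
    by (intro mult_mono real_sqrt_le_mono) auto
  finally show ?thesis .
qed

lemma fe_setting_energy_le_norm0:
  assumes fe: "fe_setting n M K cP" and "cP \<ge> 0"
    and Kz: "\<And>i. i < n \<Longrightarrow> mv n K z i = mv n M x i"
  shows "Re (ip n K z z) \<le> cP * (norm0 n M x)\<^sup>2"
proof -
  note symM = fe_settingD(1)[OF fe] and symK = fe_settingD(2)[OF fe]
    and poincare = fe_settingD(4)[OF fe, of z]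
  define k where "k = Re (ip n K z z)"
  have "k \<ge> 0" unfolding k_def by (rule fe_settingD(3)[OF fe])
  have "k \<le> cmod (ip n K z z)" unfolding k_def by (rule complex_Re_le_cmod)
  also have "\<dots> = cmod (ip n M z x)"
    using ip_mv_transfer[OF symK symM Kz] by simp
  also have "\<dots> \<le> sqrt (Re (ip n M z z)) * norm0 n M x"
    unfolding norm0_def using fe_setting_mass_nonneg[OF fe]
    by (intro ip_Cauchy_Schwarz[OF symM]) auto
  also have "\<dots> \<le> sqrt (cP * k) * norm0 n M x"
    using poincare fe_setting_mass_nonneg[OF fe, of x] unfolding k_def norm0_def
    by (intro mult_right_mono) auto
  finally have "k\<^sup>2 \<le> (sqrt (cP * k) * norm0 n M x)\<^sup>2"
    using \<open>k \<ge> 0\<close> by (intro power_mono)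
  then have "k * k \<le> (cP * (norm0 n M x)\<^sup>2) * k"
    using \<open>k \<ge> 0\<close> \<open>cP \<ge> 0\<close> by (simp add: power_mult_distrib power2_eq_square algebra_simps)
  then show ?thesis
    using \<open>k \<ge> 0\<close> \<open>cP \<ge> 0\<close> unfolding k_def[symmetric]
    by (cases "k = 0") auto
qed

lemma fe_setting_norm1_sq_le_norm0:
  assumes fe: "fe_setting n M K cP" and "cP \<ge> 0"
    and Kz: "\<And>i. i < n \<Longrightarrow> mv n K z i = mv n M x i"
  shows "(norm1 n M K z)\<^sup>2 \<le> (cP + 1) * cP * (norm0 n M x)\<^sup>2"
proof -
  have "(norm1 n M K z)\<^sup>2 = Re (ip n M z z) + Re (ip n K z z)"
    by (rule fe_setting_norm1_sq[OF fe])
  also have "\<dots> \<le> (cP + 1) * Re (ip n K z z)"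
    using fe_settingD(4)[OF fe, of z] by (simp add: distrib_right)
  also have "\<dots> \<le> (cP + 1) * (cP * (norm0 n M x)\<^sup>2)"
    using fe_setting_energy_le_norm0[OF fe \<open>cP \<ge> 0\<close> Kz] \<open>cP \<ge> 0\<close> by simp
  finally show ?thesis by simp
qed

lemma K_Pc:
  assumes "is_inverse n K Kinv" "i < n"
  shows "mv n K (Pc n Kinv M x) i = mv n M x i"
  unfolding Pc_def mv_mv[symmetric] using is_inverse_mv_right_inverse[OF assms] .

lemma EN_Pc:
  assumes "is_inverse n K Kinv"
  shows "EN n K Kinv Kt (Pc n Kinv M x) = (\<lambda>i. Ptc n Kt M x i - Pc n Kinv M x i)"
proof -
  have "EN n K Kinv Kt (Pc n Kinv M x) = mv n (msub Kt Kinv) (mv n K (Pc n Kinv M x))"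
    unfolding EN_def mv_mv ..
  also have "\<dots> = mv n (msub Kt Kinv) (mv n M x)"
    using K_Pc[OF assms] by (rule mv_cong)
  finally show ?thesis
    unfolding Ptc_def Pc_def mv_mv[symmetric] by (simp add: mv_msub fun_eq_iff)
qed

theorem lemma3:
  fixes C cP :: real
  assumes "C > 0" and "cP > 0"
  shows "\<exists>C'>0. \<forall>(n::nat) M K Kinv Kt (N::nat) (\<gamma>0::real) (\<gamma>1::real).
           fe_setting n M K cP \<and> is_inverse n K Kinv \<and> real_sym n Kt \<and>
           0 \<le> \<gamma>0 \<and> \<gamma>0 < 1 \<and> 0 \<le> \<gamma>1 \<and> \<gamma>1 < 1 \<and>
           (\<forall>x. norm1 n M K (EN n K Kinv Kt x) \<le> C * \<gamma>1 ^ N * norm1 n M K x) \<and>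
           (\<forall>x. norm0 n M (EN n K Kinv Kt x) \<le> C * \<gamma>0 ^ N * norm0 n M x)
           \<longrightarrow> (\<forall>x. cmod (ip n M (\<lambda>i. Ptc n Kt M x i - Pc n Kinv M x i) x)
                      \<le> C' * \<gamma>1 ^ N * (norm0 n M x)\<^sup>2)"
proof (intro exI[of _ "C * (cP + 1) * cP"] conjI allI impI)
  show "C * (cP + 1) * cP > 0" using assms by simp
next
  fix n M K Kinv Kt N and \<gamma>0 \<gamma>1 :: real and x
  assume "fe_setting n M K cP \<and> is_inverse n K Kinv \<and> real_sym n Kt \<and>
           0 \<le> \<gamma>0 \<and> \<gamma>0 < 1 \<and> 0 \<le> \<gamma>1 \<and> \<gamma>1 < 1 \<and>
           (\<forall>x. norm1 n M K (EN n K Kinv Kt x) \<le> C * \<gamma>1 ^ N * norm1 n M K x) \<and>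
           (\<forall>x. norm0 n M (EN n K Kinv Kt x) \<le> C * \<gamma>0 ^ N * norm0 n M x)"
  then have fe: "fe_setting n M K cP" and inv: "is_inverse n K Kinv" and "0 \<le> \<gamma>1"
    and EN_H1: "\<And>x. norm1 n M K (EN n K Kinv Kt x) \<le> C * \<gamma>1 ^ N * norm1 n M K x"
    by auto
  define z where "z = Pc n Kinv M x"
  have Kz: "\<And>i. i < n \<Longrightarrow> mv n K z i = mv n M x i"
    unfolding z_def using K_Pc[OF inv] .
  have "EN n K Kinv Kt z = (\<lambda>i. Ptc n Kt M x i - Pc n Kinv M x i)"
    unfolding z_def by (rule EN_Pc[OF inv])
  then have "ip n M (\<lambda>i. Ptc n Kt M x i - Pc n Kinv M x i) x = ip n K (EN n K Kinv Kt z) z"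
    using ip_mv_transfer[OF fe_settingD(1,2)[OF fe]] Kz by simp
  then have "cmod (ip n M (\<lambda>i. Ptc n Kt M x i - Pc n Kinv M x i) x)
      \<le> norm1 n M K (EN n K Kinv Kt z) * norm1 n M K z"
    using fe_setting_stiffness_le_norm1[OF fe] by simp
  also have "\<dots> \<le> C * \<gamma>1 ^ N * (norm1 n M K z)\<^sup>2"
    using mult_right_mono[OF EN_H1 fe_setting_norm1_nonneg[OF fe]]
    by (simp add: power2_eq_square mult.assoc)
  also have "\<dots> \<le> C * \<gamma>1 ^ N * ((cP + 1) * cP * (norm0 n M x)\<^sup>2)"
    using fe_setting_norm1_sq_le_norm0[OF fe _ Kz] assms \<open>0 \<le> \<gamma>1\<close> by (intro mult_left_mono) auto
  finally show "cmod (ip n M (\<lambda>i. Ptc n Kt M x i - Pc n Kinv M x i) x)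
      \<le> C * (cP + 1) * cP * \<gamma>1 ^ N * (norm0 n M x)\<^sup>2"
    by (simp add: algebra_simps)
qed

end
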